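(* Let $\mathbf{v}$ be the functional $\langle\mathbf{v},p\rangle=\int_{-1}^1p(x)(1-x^2)^{-1/2}dx$ with monic orthogonal polynomials $(T_n)$ ($xT_n=T_{n+1}+a_nT_{n-1}$, $a_1=\frac12$, $a_n=\frac14$ for $n\ge2$), and let $(U_n)$ be the monic Chebyshev polynomials of the second kind ($xU_n=U_{n+1}+\frac14U_{n-1}$, $U_{-1}=0,U_0=1$). Then $$\langle\mathbf{v}^{-1},p\rangle=-\frac{1}{\pi^2}\int_{-1}^1\frac{p(x)-p(0)-p'(0)x}{x^2}(1-x^2)^{1/2}dx+\frac{1}{\pi}p(0),$$ $\mathbf{v}^{-1}$ is quasi-definite, and its monic orthogonal polynomials are $T^-_0=1$, $T^-_1=x$, $T^-_n=U_n+\gamma_nU_{n-2}$ for $n\ge2$ with $\gamma_n=\frac{n+1}{4(n-1)}$ for even $n$ and $\gamma_n=\frac14$ for odd $n$. They satisfy $xT^-_n=T^-_{n+1}+a^-_nT^-_{n-1}$ with $a^-_1=-\frac12$, $a^-_n=\frac{n+1}{4(n-1)}$ for even $n\ge2$, and $a^-_n=\frac{n-2}{4n}$ for odd $n\ge3$.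
   Context: Moments $\mathbf{v}_n=\langle\mathbf{v},x^n\rangle$. The inverse $\mathbf{v}^{-1}$ is the functional with moments $(\mathbf{v}^{-1})_0=1/\mathbf{v}_0$, $(\mathbf{v}^{-1})_n=-\frac{1}{\mathbf{v}_0}\sum_{k=0}^{n-1}\mathbf{v}_{n-k}(\mathbf{v}^{-1})_k$ ($n\ge1$). Quasi-definite: all leading principal submatrices of the Hankel moment matrix nonsingular. *)

theory Defs
  imports "HOL-Analysis.Analysis" "HOL-Computational_Algebra.Polynomial" "Jordan_Normal_Form.Determinant"
begin

text \<open>A linear functional on real polynomials is given by its moment sequence
  u :: nat => real, with u n = <u, x^n>.\<close>

definition fapp :: "(nat \<Rightarrow> real) \<Rightarrow> real poly \<Rightarrow> real" where
  "fapp u p = (\<Sum>k\<le>degree p. coeff p k * u k)"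

definition cheb_mom :: "nat \<Rightarrow> real" where
  "cheb_mom n = integral {-1..1} (\<lambda>x::real. x ^ n * (1 - x\<^sup>2) powr (-1/2))"

fun finv :: "(nat \<Rightarrow> real) \<Rightarrow> nat \<Rightarrow> real" where
  "finv v 0 = 1 / v 0"
| "finv v (Suc n) = - (1 / v 0) * (\<Sum>k<Suc n. v (Suc n - k) * finv v k)"

definition quasi_definite :: "(nat \<Rightarrow> real) \<Rightarrow> bool" where
  "quasi_definite u \<longleftrightarrow>
     (\<forall>n. Determinant.det (mat (Suc n) (Suc n) (\<lambda>(i,j). u (i + j))) \<noteq> 0)"

definition monic_OPS :: "(nat \<Rightarrow> real) \<Rightarrow> (nat \<Rightarrow> real poly) \<Rightarrow> bool" where
  "monic_OPS u P \<longleftrightarrow>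
     (\<forall>n. degree (P n) = n \<and> lead_coeff (P n) = 1 \<and>
          (\<forall>k<n. fapp u (monom 1 k * P n) = 0) \<and>
          fapp u (monom 1 n * P n) \<noteq> 0)"

fun chebU :: "nat \<Rightarrow> real poly" where
  "chebU 0 = 1"
| "chebU (Suc 0) = [:0, 1:]"
| "chebU (Suc (Suc n)) = [:0, 1:] * chebU (Suc n) - Polynomial.smult (1/4) (chebU n)"

definition gammaM :: "nat \<Rightarrow> real" where
  "gammaM n = (if even n then (real n + 1) / (4 * (real n - 1)) else 1/4)"

definition Tminus :: "nat \<Rightarrow> real poly" where
  "Tminus n = (if n = 0 then 1 else if n = 1 then [:0, 1:]
               else chebU n + Polynomial.smult (gammaM n) (chebU (n - 2)))"

definition aminus :: "nat \<Rightarrow> real" where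
  "aminus n = (if n = 1 then - 1/2
               else if even n then (real n + 1) / (4 * (real n - 1))
               else (real n - 2) / (4 * real n))"

end

theory Submission
  imports Defs "HOL-Computational_Algebra.Formal_Power_Series"
begin

(* The moments of v are pi times the Taylor coefficients of (1 - x^2)^(-1/2). The recursion
   defining v^(-1) is inversion of moment sequences under convolution, so by Vandermonde's
   identity the moments of v^(-1) are the coefficients of (1 - x^2)^(1/2) divided by pi;
   integrating against (1 - x^2)^(1/2) gives the integral representation. These moments satisfy
   (j + 2) m_(j+2) = (j - 1) m_j, i.e. v^(-1) annihilates p |-> (x^3 - x) p' + (2 x^2 + 1) p.
   Applied to the U_n this determines <v^(-1), U_n>, whence <v^(-1), T^-_n> = 0 for n >= 1.
   Together with the three-term recurrence, checked directly on the U-expansion, an induction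
   shows that the T^-_n are orthogonal with nonzero norms. Their Gram matrix is then diagonal and
   nonsingular, and it is congruent to the Hankel matrix. *)

section \<open>Functionals given by their moments\<close>

lemma fapp_eq_sum_le:
  assumes "degree p \<le> N"
  shows "fapp u p = (\<Sum>k\<le>N. coeff p k * u k)"
  unfolding fapp_def using assms by (intro sum.mono_neutral_left) (auto simp: coeff_eq_0)

lemma fapp_add: "fapp u (p + q) = fapp u p + fapp u q"
proof -
  let ?N = "max (degree p) (degree q)"
  have "fapp u (p + q) = (\<Sum>k\<le>?N. coeff (p + q) k * u k)"
    by (rule fapp_eq_sum_le) (rule degree_add_le_max)
  moreover have "fapp u p = (\<Sum>k\<le>?N. coeff p k * u k)" "fapp u q = (\<Sum>k\<le>?N. coeff q k * u k)"
    by (simp_all add: fapp_eq_sum_le)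
  ultimately show ?thesis by (simp add: sum.distrib algebra_simps)
qed

lemma fapp_smult: "fapp u (Polynomial.smult c p) = c * fapp u p"
  using fapp_eq_sum_le[OF degree_smult_le, of u c p]
  by (simp add: fapp_def sum_distrib_left algebra_simps)

lemma fapp_diff: "fapp u (p - q) = fapp u p - fapp u q"
  using fapp_add[of u p "- q"] fapp_smult[of u "- 1" q] by simp

lemma fapp_sum: "fapp u (\<Sum>i\<in>A. f i) = (\<Sum>i\<in>A. fapp u (f i))"
  by (induction A rule: infinite_finite_induct) (simp_all add: fapp_add fapp_def[of u 0])

lemma fapp_monom: "fapp u (monom c m) = c * u m"
proof -
  have "fapp u (monom c m) = (\<Sum>k\<le>m. coeff (monom c m) k * u k)"
    by (rule fapp_eq_sum_le) (rule degree_monom_le)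
  also have "\<dots> = (\<Sum>k\<le>m. if k = m then c * u m else 0)"
    by (rule sum.cong) (auto simp: coeff_monom)
  finally show ?thesis by simp
qed

lemma fapp_1: "fapp u 1 = u 0"
  by (simp add: fapp_def)

lemma fapp_scale_moments: "fapp (\<lambda>k. c * u k) p = c * fapp u p"
  by (simp add: fapp_def sum_distrib_left mult_ac)

lemma fapp_pCons: "fapp u (pCons a p) = a * u 0 + fapp (\<lambda>k. u (Suc k)) p"
proof -
  have "fapp u (pCons a p) = (\<Sum>k\<le>Suc (degree p). coeff (pCons a p) k * u k)"
    by (rule fapp_eq_sum_le) (rule degree_pCons_le)
  also have "\<dots> = a * u 0 + (\<Sum>k\<le>degree p. coeff p k * u (Suc k))"
    by (subst sum.atMost_Suc_shift) simp
  finally show ?thesis by (simp add: fapp_def)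
qed

lemma has_integral_poly_mult:
  assumes "\<And>k. ((\<lambda>x. x ^ k * w x) has_integral m k) S"
  shows "((\<lambda>x. poly p x * w x) has_integral fapp m p) S"
proof -
  have "((\<lambda>x. \<Sum>k\<le>degree p. coeff p k * (x ^ k * w x)) has_integral
          (\<Sum>k\<le>degree p. coeff p k * m k)) S"
    by (intro has_integral_sum has_integral_mult_right assms) simp
  then show ?thesis
    by (simp add: fapp_def poly_altdef sum_distrib_left mult_ac)
qed

section \<open>Orthogonal polynomial sequences\<close>

lemma monom_Suc_mult: "monom 1 (Suc k) * p = monom 1 k * ([:0, 1:] * (p :: real poly))"
  by (rule poly_ext) (simp add: poly_monom)

lemma monic_OPS_if_recurrence:
  fixes u :: "nat \<Rightarrow> real" and P :: "nat \<Rightarrow> real poly" and a :: "nat \<Rightarrow> real"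
  assumes deg: "\<And>n. degree (P n) = n" and lead: "\<And>n. lead_coeff (P n) = 1"
    and P0: "P 0 = 1" and u0: "u 0 \<noteq> 0"
    and rec: "\<And>n. n \<ge> 1 \<Longrightarrow> [:0, 1:] * P n = P (Suc n) + Polynomial.smult (a n) (P (n - 1))"
    and a_nonzero: "\<And>n. n \<ge> 1 \<Longrightarrow> a n \<noteq> 0"
    and orth_1: "\<And>n. n \<ge> 1 \<Longrightarrow> fapp u (P n) = 0"
  shows "monic_OPS u P"
proof -
  have orth: "fapp u (monom 1 k * P n) = 0" if "k < n" for k n
    using that
  proof (induction k arbitrary: n)
    case 0
    then show ?case using orth_1 by simp
  next
    case (Suc k)
    have "monom 1 (Suc k) * P n = monom 1 k * P (Suc n) + Polynomial.smult (a n) (monom 1 k * P (n - 1))"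
      using rec[of n] Suc.prems by (simp add: monom_Suc_mult distrib_left)
    then show ?case using Suc by (simp add: fapp_add fapp_smult)
  qed
  have norm: "fapp u (monom 1 n * P n) \<noteq> 0" for n
  proof (induction n)
    case 0
    then show ?case using P0 u0 by (simp add: fapp_1)
  next
    case (Suc n)
    have "monom 1 (Suc n) * P (Suc n)
        = monom 1 n * P (Suc (Suc n)) + Polynomial.smult (a (Suc n)) (monom 1 n * P n)"
      using rec[of "Suc n"] by (simp add: monom_Suc_mult distrib_left)
    then have "fapp u (monom 1 (Suc n) * P (Suc n)) = a (Suc n) * fapp u (monom 1 n * P n)"
      using orth[of n "Suc (Suc n)"] by (simp add: fapp_add fapp_smult)
    then show ?case using Suc a_nonzero[of "Suc n"] by simp
  qed
  show ?thesis
    unfolding monic_OPS_def using deg lead orth norm by blast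
qed

lemma poly_eq_sum_monoms_less:
  assumes "\<And>k. k \<ge> n \<Longrightarrow> coeff p k = 0"
  shows "p = (\<Sum>k<n. monom (coeff p k) k)"
proof (rule poly_eqI)
  fix j
  have "coeff (\<Sum>k<n. monom (coeff p k) k) j = (\<Sum>k<n. if k = j then coeff p k else 0)"
    by (simp add: coeff_sum coeff_monom)
  also have "\<dots> = coeff p j"
    using assms by (cases "j < n") auto
  finally show "coeff p j = coeff (\<Sum>k<n. monom (coeff p k) k) j" by simp
qed

lemma fapp_mult_eq_bilinear:
  assumes "\<And>k. k \<ge> n \<Longrightarrow> coeff p k = 0" and "\<And>k. k \<ge> n \<Longrightarrow> coeff q k = 0"
  shows "fapp u (p * q) = (\<Sum>l<n. (\<Sum>k<n. coeff p k * u (k + l)) * coeff q l)"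
proof -
  have "p * q = (\<Sum>k<n. monom (coeff p k) k) * (\<Sum>l<n. monom (coeff q l) l)"
    using poly_eq_sum_monoms_less[OF assms(1)] poly_eq_sum_monoms_less[OF assms(2)] by simp
  also have "\<dots> = (\<Sum>k<n. \<Sum>l<n. monom (coeff p k * coeff q l) (k + l))"
    by (simp add: sum_product mult_monom)
  finally have "fapp u (p * q) = (\<Sum>k<n. \<Sum>l<n. coeff p k * coeff q l * u (k + l))"
    by (simp add: fapp_sum fapp_monom)
  also have "\<dots> = (\<Sum>l<n. (\<Sum>k<n. coeff p k * u (k + l)) * coeff q l)"
    by (subst sum.swap) (simp add: sum_distrib_left sum_distrib_right mult_ac)
  finally show ?thesis .
qed

lemma monic_OPS_orthogonal:
  assumes "monic_OPS u P" and "\<And>k. k \<ge> n \<Longrightarrow> coeff q k = 0"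
  shows "fapp u (q * P n) = 0"
proof -
  have "q * P n = (\<Sum>k<n. monom (coeff q k) k) * P n"
    using poly_eq_sum_monoms_less[OF assms(2)] by simp
  also have "\<dots> = (\<Sum>k<n. Polynomial.smult (coeff q k) (monom 1 k * P n))"
    by (simp add: sum_distrib_right smult_monom_mult)
  finally show ?thesis
    using assms(1) by (simp add: fapp_sum fapp_smult monic_OPS_def)
qed

lemma monic_OPS_square_nonzero:
  assumes "monic_OPS u P"
  shows "fapp u (P n * P n) \<noteq> 0"
proof -
  have P: "degree (P n) = n" "lead_coeff (P n) = 1" "fapp u (monom 1 n * P n) \<noteq> 0"
    using assms unfolding monic_OPS_def by blast+
  define r where "r = P n - monom 1 n"
  have "coeff r k = 0" if "k \<ge> n" for k
    using P that by (cases "k = n") (auto simp: r_def coeff_monom intro: coeff_eq_0)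
  then have "fapp u (r * P n) = 0"
    by (rule monic_OPS_orthogonal[OF assms])
  moreover have "P n * P n = monom 1 n * P n + r * P n"
    by (simp add: r_def algebra_simps)
  ultimately show ?thesis
    using P by (simp add: fapp_add)
qed

text \<open>With C the coefficient matrix of the P_i, C H C^T is the Gram matrix of the P_i, which is
  triangular with nonzero diagonal; hence the Hankel matrix H is nonsingular.\<close>
lemma quasi_definite_if_monic_OPS:
  assumes ops: "monic_OPS u P"
  shows "quasi_definite u"
  unfolding quasi_definite_def
proof
  fix n
  define m where "m = Suc n"
  define H where "H = mat m m (\<lambda>(i, j). u (i + j))"
  define C where "C = mat m m (\<lambda>(i, j). coeff (P i) j)"
  define G where "G = C * H * transpose_mat C"
  have carrier: "C \<in> carrier_mat m m" "H \<in> carrier_mat m m" "G \<in> carrier_mat m m"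
    by (auto simp: C_def H_def G_def)
  have vanish: "coeff (P i) k = 0" if "i < k" for i k
    using ops that by (auto simp: monic_OPS_def intro: coeff_eq_0)
  have G_entry: "G $$ (i, j) = fapp u (P i * P j)" if "i < m" "j < m" for i j
    using that fapp_mult_eq_bilinear[of m "P i" "P j" u] vanish
    by (simp add: G_def C_def H_def scalar_prod_def atLeast0LessThan)
  have "upper_triangular G"
    unfolding upper_triangular_def
  proof (intro allI impI)
    fix i j assume "i < dim_row G" "j < i"
    then have "G $$ (i, j) = fapp u (P j * P i)"
      using carrier G_entry[of i j] by (simp add: mult.commute)
    also have "\<dots> = 0"
      using \<open>j < i\<close> vanish by (intro monic_OPS_orthogonal[OF ops]) auto
    finally show "G $$ (i, j) = 0" .
  qed
  then have "Determinant.det G = prod_list (diag_mat G)"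
    using carrier by (intro det_upper_triangular) auto
  moreover have "0 \<notin> set (diag_mat G)"
    using carrier G_entry monic_OPS_square_nonzero[OF ops] by (auto simp: diag_mat_def)
  ultimately have "Determinant.det G \<noteq> 0"
    by (simp add: prod_list_zero_iff)
  moreover have "Determinant.det G = Determinant.det C * Determinant.det H * Determinant.det (transpose_mat C)"
    using carrier unfolding G_def by (subst det_mult[of _ m]) (auto simp: det_mult)
  ultimately show "Determinant.det (mat (Suc n) (Suc n) (\<lambda>(i, j). u (i + j))) \<noteq> 0"
    by (simp add: H_def m_def)
qed

section \<open>Coefficients of the binomial series of (1 - x^2)^a\<close>

definition sq_binom_coeff :: "real \<Rightarrow> nat \<Rightarrow> real" where
  "sq_binom_coeff a n = (if even n then (-1) ^ (n div 2) * (a gchoose (n div 2)) else 0)"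

lemma sq_binom_coeff_0 [simp]: "sq_binom_coeff a 0 = 1"
  and sq_binom_coeff_Suc_0 [simp]: "sq_binom_coeff a (Suc 0) = 0"
  by (simp_all add: sq_binom_coeff_def)

lemma gbinomial_Suc_ratio: "(a :: real) gchoose Suc m = (a - real m) / (real m + 1) * (a gchoose m)"
proof -
  have "(real m + 1) * (a gchoose Suc m) = (a - real m) * (a gchoose m)"
    using gbinomial_mult_1[of a m] by (simp add: algebra_simps)
  then show ?thesis
    by (simp add: field_simps)
qed

lemma sq_binom_coeff_Suc_Suc:
  "(real n + 2) * sq_binom_coeff a (Suc (Suc n)) = (real n - 2 * a) * sq_binom_coeff a n"
proof (cases "even n")
  case True
  then obtain m where n: "n = 2 * m" by blast
  then show ?thesis
    by (simp add: sq_binom_coeff_def gbinomial_Suc_ratio field_simps)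
qed (simp add: sq_binom_coeff_def)

lemma sq_binom_coeff_Pascal:
  "sq_binom_coeff (a + 1) (Suc (Suc n)) = sq_binom_coeff a (Suc (Suc n)) - sq_binom_coeff a n"
proof (cases "even n")
  case True
  then obtain m where n: "n = 2 * m" by blast
  then show ?thesis
    using gbinomial_Suc_Suc[of a m] by (simp add: sq_binom_coeff_def algebra_simps)
qed (simp add: sq_binom_coeff_def)

text \<open>Vandermonde's identity, i.e. (1 - x^2)^a (1 - x^2)^b = (1 - x^2)^(a + b).\<close>
lemma sq_binom_coeff_convolution:
  "(\<Sum>k\<le>N. sq_binom_coeff a (N - k) * sq_binom_coeff b k) = sq_binom_coeff (a + b) N"
proof (cases "even N")
  case False
  then have "sq_binom_coeff a (N - k) * sq_binom_coeff b k = 0" if "k \<le> N" for k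
    using that by (auto simp: sq_binom_coeff_def)
  then show ?thesis
    using False by (simp add: sq_binom_coeff_def[of "a + b"] sum.neutral)
next
  case True
  then obtain M where N: "N = 2 * M" by blast
  let ?f = "\<lambda>k. sq_binom_coeff a (N - k) * sq_binom_coeff b k"
  have "(\<Sum>k\<le>N. ?f k) = (\<Sum>k\<in>(\<lambda>j. 2 * j) ` {..M}. ?f k)"
    by (rule sum.mono_neutral_right) (auto simp: N sq_binom_coeff_def)
  also have "\<dots> = (\<Sum>j\<le>M. ?f (2 * j))"
    by (simp add: sum.reindex inj_on_def)
  also have "\<dots> = (\<Sum>j\<le>M. (-1) ^ M * ((b gchoose j) * (a gchoose (M - j))))"
  proof (rule sum.cong)
    fix j assume "j \<in> {..M}"
    then have index: "N - 2 * j = 2 * (M - j)" and sign: "(-1 :: real) ^ (M - j) * (-1) ^ j = (-1) ^ M"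
      by (simp_all add: N power_add[symmetric])
    show "?f (2 * j) = (-1) ^ M * ((b gchoose j) * (a gchoose (M - j)))"
      unfolding index sq_binom_coeff_def using sign by (simp add: mult_ac)
  qed simp
  also have "\<dots> = sq_binom_coeff (a + b) N"
    using gbinomial_Vandermonde[of b a M]
    by (simp add: N sq_binom_coeff_def sum_distrib_left[symmetric] atMost_atLeast0 add.commute)
  finally show ?thesis .
qed

lemma sq_binom_coeff_0_left: "sq_binom_coeff 0 n = (if n = 0 then 1 else 0)"
  by (auto simp: sq_binom_coeff_def gbinomial_0_left elim: oddE)

section \<open>Moments of the Chebyshev functional and of its inverse\<close>

lemma square_less_1: "x \<in> {-1<..<1} \<Longrightarrow> (x :: real)\<^sup>2 < 1"
  by (simp add: abs_square_less_1 abs_less_iff)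

lemma cheb_weight_eq_inverse_sqrt: "(x :: real)\<^sup>2 < 1 \<Longrightarrow> (1 - x\<^sup>2) powr (-1/2) = 1 / sqrt (1 - x\<^sup>2)"
  using powr_minus_divide[of "1 - x\<^sup>2" "1/2"] by (simp add: powr_half_sqrt)

lemma has_real_derivative_sqrt_one_minus_square:
  assumes "(x :: real)\<^sup>2 < 1"
  shows "((\<lambda>x. sqrt (1 - x\<^sup>2)) has_real_derivative - x / sqrt (1 - x\<^sup>2)) (at x)"
proof -
  have "((\<lambda>x. sqrt (1 - x\<^sup>2)) has_real_derivative inverse (sqrt (1 - x\<^sup>2)) / 2 * - (2 * x)) (at x)"
    using assms by (intro DERIV_chain2[OF DERIV_real_sqrt] derivative_eq_intros) auto
  then show ?thesis
    by (simp add: field_simps)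
qed

lemma has_integral_cheb_weight: "((\<lambda>x. (1 - x\<^sup>2) powr (-1/2)) has_integral pi) {-1..1::real}"
proof -
  have "((\<lambda>x. (1 - x\<^sup>2) powr (-1/2)) has_integral arcsin 1 - arcsin (-1)) {-1..1::real}"
  proof (rule fundamental_theorem_of_calculus_interior)
    show "continuous_on {-1..1} arcsin"
      by (rule continuous_on_arcsin')
    fix x :: real assume x: "x \<in> {-1<..<1}"
    have "DERIV arcsin x :> inverse (sqrt (1 - x\<^sup>2))"
      using x by (intro DERIV_arcsin) auto
    then show "(arcsin has_vector_derivative (1 - x\<^sup>2) powr (-1/2)) (at x)"
      unfolding cheb_weight_eq_inverse_sqrt[OF square_less_1[OF x]] inverse_eq_divide
      by (simp add: has_real_derivative_iff_has_vector_derivative)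
  qed simp
  then show ?thesis by simp
qed

text \<open>Integration by parts in disguise: the integrand is the derivative of x^j sqrt(1 - x^2).\<close>
lemma has_integral_cheb_weight_reduction:
  "((\<lambda>x. (real j * x ^ (j - 1) - (real j + 1) * x ^ Suc j) * (1 - x\<^sup>2) powr (-1/2))
     has_integral 0) {-1..1::real}"
proof -
  let ?G = "\<lambda>x::real. x ^ j * sqrt (1 - x\<^sup>2)"
  have "((\<lambda>x. (real j * x ^ (j - 1) - (real j + 1) * x ^ Suc j) * (1 - x\<^sup>2) powr (-1/2))
          has_integral ?G 1 - ?G (-1)) {-1..1}"
  proof (rule fundamental_theorem_of_calculus_interior)
    show "continuous_on {-1..1} ?G"
      by (intro continuous_intros)
    fix x :: real assume "x \<in> {-1<..<1}"
    then have x: "x\<^sup>2 < 1" by (rule square_less_1)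
    then have s: "sqrt (1 - x\<^sup>2) > 0" "sqrt (1 - x\<^sup>2) * sqrt (1 - x\<^sup>2) = 1 - x\<^sup>2"
      by simp_all
    have shift: "real j * x ^ (j - 1) * x\<^sup>2 = real j * x ^ Suc j"
      by (cases j) (simp_all add: power2_eq_square)
    have "(?G has_real_derivative
            real j * x ^ (j - 1) * sqrt (1 - x\<^sup>2) + - x / sqrt (1 - x\<^sup>2) * x ^ j) (at x)"
      using DERIV_pow[of j x] by (intro DERIV_mult has_real_derivative_sqrt_one_minus_square x) simp
    moreover have "real j * x ^ (j - 1) * sqrt (1 - x\<^sup>2) + - x / sqrt (1 - x\<^sup>2) * x ^ j
        = (real j * x ^ (j - 1) - (real j + 1) * x ^ Suc j) * (1 - x\<^sup>2) powr (-1/2)"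
      using s shift unfolding cheb_weight_eq_inverse_sqrt[OF x] by (simp add: field_simps) metis
    ultimately show "(?G has_vector_derivative
        (real j * x ^ (j - 1) - (real j + 1) * x ^ Suc j) * (1 - x\<^sup>2) powr (-1/2)) (at x)"
      by (simp add: has_real_derivative_iff_has_vector_derivative)
  qed simp
  then show ?thesis by simp
qed

lemma has_integral_cheb_moment:
  "((\<lambda>x. x ^ n * (1 - x\<^sup>2) powr (-1/2)) has_integral pi * sq_binom_coeff (-1/2) n) {-1..1}"
proof (induction n rule: less_induct)
  case (less n)
  let ?w = "\<lambda>x::real. (1 - x\<^sup>2) powr (-1/2)"
  consider "n = 0" | "n = 1" | k where "n = Suc (Suc k)"
    by (metis One_nat_def not0_implies_Suc)
  then show ?case
  proof cases
    case 1
    then show ?thesis using has_integral_cheb_weight by simp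
  next
    case 2
    then show ?thesis using has_integral_neg[OF has_integral_cheb_weight_reduction[of 0]] by simp
  next
    case 3
    have "((\<lambda>x. 1 / (real k + 2) * ((real k + 1) * (x ^ k * ?w x)
              - ((real k + 1) * x ^ k - (real k + 2) * x ^ Suc (Suc k)) * ?w x))
            has_integral 1 / (real k + 2) * ((real k + 1) * (pi * sq_binom_coeff (-1/2) k) - 0)) {-1..1}"
      using less[of k] has_integral_cheb_weight_reduction[of "Suc k"] 3
      by (intro has_integral_mult_right has_integral_diff) (simp_all add: algebra_simps)
    moreover have "(\<lambda>x. 1 / (real k + 2) * ((real k + 1) * (x ^ k * ?w x)
              - ((real k + 1) * x ^ k - (real k + 2) * x ^ Suc (Suc k)) * ?w x))
        = (\<lambda>x. x ^ Suc (Suc k) * ?w x)"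
      by (rule ext) (simp add: field_simps)
    moreover have "1 / (real k + 2) * ((real k + 1) * (pi * sq_binom_coeff (-1/2) k) - 0)
        = pi * sq_binom_coeff (-1/2) (Suc (Suc k))"
      using sq_binom_coeff_Suc_Suc[of k "-1/2"] by (simp add: field_simps)
    ultimately show ?thesis
      using 3 by simp
  qed
qed

lemma cheb_mom_eq: "cheb_mom n = pi * sq_binom_coeff (-1/2) n"
  unfolding cheb_mom_def by (rule integral_unique[OF has_integral_cheb_moment])

lemma finv_cheb_mom: "finv cheb_mom n = sq_binom_coeff (1/2) n / pi"
proof (induction n rule: less_induct)
  case (less n)
  show ?case
  proof (cases n)
    case 0
    then show ?thesis by (simp add: cheb_mom_eq)
  next
    case (Suc m)
    have "(\<Sum>k<Suc m. cheb_mom (Suc m - k) * finv cheb_mom k)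
        = (\<Sum>k<Suc m. sq_binom_coeff (-1/2) (Suc m - k) * sq_binom_coeff (1/2) k)"
    proof (rule sum.cong)
      fix k assume "k \<in> {..<Suc m}"
      then have "finv cheb_mom k = sq_binom_coeff (1/2) k / pi"
        using Suc by (intro less) simp
      then show "cheb_mom (Suc m - k) * finv cheb_mom k
          = sq_binom_coeff (-1/2) (Suc m - k) * sq_binom_coeff (1/2) k"
        by (simp add: cheb_mom_eq[of "Suc m - k"])
    qed simp
    also have "\<dots> = - sq_binom_coeff (1/2) (Suc m)"
      using sq_binom_coeff_convolution[where N = "Suc m" and a = "-1/2" and b = "1/2"]
      by (simp add: sq_binom_coeff_0_left lessThan_Suc_atMost[symmetric])
    finally have "(\<Sum>k<Suc m. cheb_mom (Suc m - k) * finv cheb_mom k) = - sq_binom_coeff (1/2) (Suc m)" .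
    then show ?thesis
      unfolding Suc finv.simps cheb_mom_eq[of 0] by simp
  qed
qed

declare finv.simps [simp del]

lemma powr_neg_half_mult: "(y :: real) \<ge> 0 \<Longrightarrow> y * y powr (-1/2) = y powr (1/2)"
  by (cases "y = 0") (simp_all add: powr_mult_base)

lemma has_integral_sqrt_weight_moment:
  "((\<lambda>x. x ^ n * (1 - x\<^sup>2) powr (1/2)) has_integral
      pi * (sq_binom_coeff (-1/2) n - sq_binom_coeff (-1/2) (Suc (Suc n)))) {-1..1}"
proof -
  have "((\<lambda>x. x ^ n * (1 - x\<^sup>2) powr (-1/2) - x ^ Suc (Suc n) * (1 - x\<^sup>2) powr (-1/2)) has_integral
      pi * sq_binom_coeff (-1/2) n - pi * sq_binom_coeff (-1/2) (Suc (Suc n))) {-1..1}"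
    by (intro has_integral_diff has_integral_cheb_moment)
  then show ?thesis
    unfolding right_diff_distrib
  proof (rule has_integral_eq[rotated])
    fix x :: real assume "x \<in> {-1..1}"
    then have "1 - x\<^sup>2 \<ge> 0" by (simp add: abs_square_le_1 abs_le_iff)
    have "x ^ n * (1 - x\<^sup>2) powr (-1/2) - x ^ Suc (Suc n) * (1 - x\<^sup>2) powr (-1/2)
        = x ^ n * ((1 - x\<^sup>2) * (1 - x\<^sup>2) powr (-1/2))"
      by (simp add: algebra_simps power2_eq_square)
    then show "x ^ n * (1 - x\<^sup>2) powr (-1/2) - x ^ Suc (Suc n) * (1 - x\<^sup>2) powr (-1/2)
        = x ^ n * (1 - x\<^sup>2) powr (1/2)"
      using powr_neg_half_mult[OF \<open>1 - x\<^sup>2 \<ge> 0\<close>] by simp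
  qed
qed

lemma pCons_coeff_poly_shift_2: "p = pCons (coeff p 0) (pCons (coeff p 1) (poly_shift 2 p))"
  by (rule poly_eqI) (simp add: coeff_pCons coeff_poly_shift split: nat.split)

lemma fapp_finv_cheb_mom_integral:
  "fapp (finv cheb_mom) p =
     - (1 / pi\<^sup>2) * integral {-1..1}
         (\<lambda>x. (poly p x - poly p 0 - poly (pderiv p) 0 * x) / x\<^sup>2 * (1 - x\<^sup>2) powr (1/2))
     + (1 / pi) * poly p 0"
proof -
  define q where "q = poly_shift 2 p"
  define c0 where "c0 = poly p 0"
  define c1 where "c1 = poly (pderiv p) 0"
  define m where "m k = pi * (sq_binom_coeff (-1/2) k - sq_binom_coeff (-1/2) (Suc (Suc k)))" for k
  have split: "p = pCons c0 (pCons c1 q)"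
    using pCons_coeff_poly_shift_2[of p] by (simp add: q_def c0_def c1_def poly_0_coeff_0 coeff_pderiv)
  then have "poly p x - c0 - c1 * x = x\<^sup>2 * poly q x" for x
    by (simp add: power2_eq_square algebra_simps)
  then have integrand: "(poly p x - c0 - c1 * x) / x\<^sup>2 * (1 - x\<^sup>2) powr (1/2)
      = poly q x * (1 - x\<^sup>2) powr (1/2)" if "x \<in> {-1..1} - {0}" for x
    using that by simp
  have "((\<lambda>x. poly q x * (1 - x\<^sup>2) powr (1/2)) has_integral fapp m q) {-1..1}"
    unfolding m_def by (rule has_integral_poly_mult[OF has_integral_sqrt_weight_moment])
  then have integral: "integral {-1..1}
      (\<lambda>x. (poly p x - c0 - c1 * x) / x\<^sup>2 * (1 - x\<^sup>2) powr (1/2)) = fapp m q"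
    by (intro integral_unique has_integral_spike_finite[where S = "{0}", OF _ integrand]) simp_all
  have moments: "(\<lambda>k. finv cheb_mom (Suc (Suc k))) = (\<lambda>k. - (1 / pi\<^sup>2) * m k)"
    using sq_binom_coeff_Pascal[where a = "-1/2"]
    by (simp add: fun_eq_iff finv_cheb_mom m_def power2_eq_square field_simps)
       (metis distrib_left)
  have "fapp (finv cheb_mom) (pCons c0 (pCons c1 q))
      = c0 / pi + fapp (\<lambda>k. finv cheb_mom (Suc (Suc k))) q"
    by (simp add: fapp_pCons finv_cheb_mom)
  also have "\<dots> = c0 / pi - (1 / pi\<^sup>2) * fapp m q"
    unfolding moments fapp_scale_moments by simp
  finally show ?thesis
    unfolding integral c0_def[symmetric] c1_def[symmetric] split[symmetric] by simp
qed

section \<open>A Pearson-type equation for the inverse functional\<close>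

definition pearson :: "real poly \<Rightarrow> real poly" where
  "pearson p = [:0, -1, 0, 1:] * pderiv p + [:1, 0, 2:] * p"

lemma poly_pearson:
  "poly (pearson p) x = (x ^ 3 - x) * poly (pderiv p) x + (2 * x\<^sup>2 + 1) * poly p x"
  by (simp add: pearson_def algebra_simps power2_eq_square power3_eq_cube)

lemma pearson_monom:
  "pearson (monom c j) = monom ((real j + 2) * c) (Suc (Suc j)) - monom ((real j - 1) * c) j"
  by (rule poly_ext, cases j)
     (simp_all add: poly_pearson poly_monom pderiv_monom algebra_simps power2_eq_square power3_eq_cube)

lemma pearson_add: "pearson (p + q) = pearson p + pearson q"
  by (simp add: pearson_def pderiv_add distrib_left)

lemma pearson_sum: "pearson (\<Sum>i\<in>A. f i) = (\<Sum>i\<in>A. pearson (f i))"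
  by (induction A rule: infinite_finite_induct) (simp_all add: pearson_add pearson_def[of 0])

lemma fapp_pearson_eq_0:
  assumes "\<And>j. (real j + 2) * u (Suc (Suc j)) = (real j - 1) * u j"
  shows "fapp u (pearson p) = 0"
proof -
  have monom: "fapp u (pearson (monom c j)) = c * ((real j + 2) * u (Suc (Suc j)) - (real j - 1) * u j)" for c j
    by (simp add: pearson_monom fapp_diff fapp_monom algebra_simps)
  have "pearson p = (\<Sum>i\<le>degree p. pearson (monom (coeff p i) i))"
    by (simp add: poly_as_sum_of_monoms flip: pearson_sum)
  then show ?thesis
    by (simp add: fapp_sum monom assms)
qed

lemma fapp_finv_cheb_mom_pearson: "fapp (finv cheb_mom) (pearson p) = 0"
  by (rule fapp_pearson_eq_0) (use sq_binom_coeff_Suc_Suc[where a = "1/2"] in \<open>simp add: finv_cheb_mom\<close>)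

section \<open>Chebyshev polynomials of the second kind\<close>

lemma coeff_chebU: "coeff (chebU n) n = 1 \<and> (\<forall>k>n. coeff (chebU n) k = 0)"
  by (induction n rule: chebU.induct) (auto simp: coeff_pCons split: nat.split)

lemma chebU_x_mult: "[:0, 1:] * chebU (Suc m) = chebU (Suc (Suc m)) + Polynomial.smult (1/4) (chebU m)"
  by simp

lemma poly_pearson_chebU_Suc_Suc:
  "poly (pearson (chebU (Suc (Suc n)))) x
     = x * poly (pearson (chebU (Suc n))) x + (x ^ 3 - x) * poly (chebU (Suc n)) x
       - poly (pearson (chebU n)) x / 4"
  by (simp add: poly_pearson pderiv_mult pderiv_diff pderiv_smult pderiv_pCons field_simps)

lemma pearson_chebU:
  "pearson (chebU (Suc (Suc n)))
     = Polynomial.smult (real n + 4) (chebU (n + 4)) + Polynomial.smult (3/2) (chebU (Suc (Suc n)))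
       - Polynomial.smult ((real n + 2) / 16) (chebU n)"
proof (rule poly_ext)
  fix x :: real
  have L0: "poly (pearson (chebU 0)) x = 2 * x\<^sup>2 + 1"
    and L1: "poly (pearson (chebU (Suc 0))) x = (x ^ 3 - x) + (2 * x\<^sup>2 + 1) * x"
    by (simp_all add: poly_pearson pderiv_pCons)
  show "poly (pearson (chebU (Suc (Suc n)))) x = poly (Polynomial.smult (real n + 4) (chebU (n + 4))
      + Polynomial.smult (3/2) (chebU (Suc (Suc n))) - Polynomial.smult ((real n + 2) / 16) (chebU n)) x"
  proof (induction n rule: less_induct)
    case (less n)
    consider "n = 0" | "n = 1" | k where "n = Suc (Suc k)"
      by (metis One_nat_def not0_implies_Suc)
    then show ?case
    proof cases
      case 1
      show ?thesis
        unfolding 1 poly_pearson_chebU_Suc_Suc[of 0] L0 L1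
        by (simp add: numeral_eq_Suc field_simps power2_eq_square power3_eq_cube)
    next
      case 2
      show ?thesis
        unfolding 2 One_nat_def poly_pearson_chebU_Suc_Suc[of "Suc 0"] poly_pearson_chebU_Suc_Suc[of 0] L0 L1
        by (simp add: numeral_eq_Suc field_simps power2_eq_square power3_eq_cube)
    next
      case 3
      have IH: "poly (pearson (chebU (Suc (Suc m)))) x = (real m + 4) * poly (chebU (Suc (Suc (Suc (Suc m))))) x
          + 3/2 * poly (chebU (Suc (Suc m))) x - (real m + 2) / 16 * poly (chebU m) x" if "m < n" for m
        using less[OF that] by (simp add: numeral_eq_Suc del: chebU.simps)
      have "k < n" "Suc k < n"
        using 3 by simp_all
      then show ?thesis
        unfolding 3 poly_pearson_chebU_Suc_Suc[of "Suc (Suc k)"] IH[OF \<open>k < n\<close>] IH[OF \<open>Suc k < n\<close>]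
        by (simp add: numeral_eq_Suc field_simps power2_eq_square power3_eq_cube)
    qed
  qed
qed

lemma pearson_chebU_0: "pearson (chebU 0) = Polynomial.smult 2 (chebU 2) + Polynomial.smult (3/2) (chebU 0)"
  by (rule poly_ext) (simp add: poly_pearson numeral_eq_Suc field_simps power2_eq_square)

lemma pearson_chebU_1: "pearson (chebU 1) = Polynomial.smult 3 (chebU 3) + Polynomial.smult (3/2) (chebU 1)"
  by (rule poly_ext) (simp add: poly_pearson pderiv_pCons numeral_eq_Suc field_simps power2_eq_square power3_eq_cube)

lemma fapp_finv_chebU_recurrence:
  "(real m + 4) * fapp (finv cheb_mom) (chebU (m + 4)) + 3/2 * fapp (finv cheb_mom) (chebU (Suc (Suc m)))
     - (real m + 2) / 16 * fapp (finv cheb_mom) (chebU m) = 0"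
  using fapp_finv_cheb_mom_pearson[of "chebU (Suc (Suc m))"]
  unfolding pearson_chebU by (simp add: fapp_add fapp_diff fapp_smult)

lemma fapp_finv_chebU_small:
  "fapp (finv cheb_mom) (chebU 0) = 1 / pi" "fapp (finv cheb_mom) (chebU 1) = 0"
  "fapp (finv cheb_mom) (chebU 2) = - 3/4 / pi" "fapp (finv cheb_mom) (chebU 3) = 0"
proof -
  let ?u = "finv cheb_mom"
  show U0: "fapp ?u (chebU 0) = 1 / pi"
    by (simp add: fapp_1 finv_cheb_mom)
  show U1: "fapp ?u (chebU 1) = 0"
    using fapp_monom[of ?u 1 1] by (simp add: monom_Suc finv_cheb_mom one_pCons)
  have "2 * fapp ?u (chebU 2) + 3/2 * fapp ?u (chebU 0) = 0"
    using fapp_finv_cheb_mom_pearson[of "chebU 0"] unfolding pearson_chebU_0 fapp_add fapp_smult .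
  then show "fapp ?u (chebU 2) = - 3/4 / pi"
    unfolding U0 by (simp add: field_simps)
  have "3 * fapp ?u (chebU 3) + 3/2 * fapp ?u (chebU 1) = 0"
    using fapp_finv_cheb_mom_pearson[of "chebU 1"] unfolding pearson_chebU_1 fapp_add fapp_smult .
  then show "fapp ?u (chebU 3) = 0"
    unfolding U1 by simp
qed

lemma fapp_finv_chebU:
  "fapp (finv cheb_mom) (chebU n) = (if even n then (real n + 1) * (-1/4) ^ (n div 2) / pi else 0)"
proof (induction n rule: less_induct)
  case (less n)
  let ?u = "finv cheb_mom"
  show ?case
  proof (cases "n < 4")
    case True
    from True consider "n = 0" | "n = 1" | "n = 2" | "n = 3"
      by linarith
    then show ?thesis
      by cases (simp_all only: fapp_finv_chebU_small, simp_all)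
  next
    case False
    define m where "m = n - 4"
    then have n: "n = m + 4"
      using False by simp
    have rec: "fapp ?u (chebU n) = ((real m + 2) / 16 * fapp ?u (chebU m)
        - 3/2 * fapp ?u (chebU (Suc (Suc m)))) / (real m + 4)"
      using fapp_finv_chebU_recurrence[of m] unfolding n by (simp add: field_simps)
    show ?thesis
    proof (cases "even m")
      case True
      then obtain j where m: "m = 2 * j" by blast
      define c where "c = (-1/4 :: real) ^ j / pi"
      have A: "fapp ?u (chebU m) = (2 * real j + 1) * c"
        using less[of m] unfolding n m c_def by simp
      have "Suc (Suc m) = 2 * Suc j" "n = 2 * Suc (Suc j)"
        using m n by simp_all
      then have B: "fapp ?u (chebU (Suc (Suc m))) = (2 * real j + 3) * (- 1/4 * c)"
        and C: "(if even n then (real n + 1) * (-1/4) ^ (n div 2) / pi else 0) = (2 * real j + 5) * (c / 16)"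
        using less[of "Suc (Suc m)"] unfolding c_def by (simp_all add: n algebra_simps del: chebU.simps)
      show ?thesis
        unfolding rec A B C using m by (simp add: field_simps)
    next
      case False
      then show ?thesis
        unfolding rec using less[of m] less[of "Suc (Suc m)"] n by (simp del: chebU.simps)
    qed
  qed
qed

section \<open>The orthogonal polynomials of the inverse functional\<close>

lemma degree_eqI_coeff:
  fixes p :: "'a :: zero_neq_one poly"
  assumes "coeff p n = 1" and "\<And>k. k > n \<Longrightarrow> coeff p k = 0"
  shows "degree p = n"
proof (rule antisym)
  show "degree p \<le> n"
    using assms(2) by (intro degree_le) auto
  show "n \<le> degree p"
    using assms(1) by (intro le_degree) simp
qed

lemma Tminus_Suc_Suc:
  "Tminus (Suc (Suc n)) = chebU (Suc (Suc n)) + Polynomial.smult (gammaM (Suc (Suc n))) (chebU n)"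
  by (simp add: Tminus_def)

lemma Tminus_small:
  "Tminus 0 = 1" "Tminus 1 = [:0, 1:]" "Tminus 2 = [:1/2, 0, 1:]" "Tminus 3 = [:0, -1/4, 0, 1:]"
proof -
  have "gammaM 2 = 3/4" "gammaM 3 = 1/4"
    by (simp_all add: gammaM_def)
  then show "Tminus 0 = 1" "Tminus 1 = [:0, 1:]" "Tminus 2 = [:1/2, 0, 1:]" "Tminus 3 = [:0, -1/4, 0, 1:]"
    by (simp_all add: Tminus_def numeral_eq_Suc)
qed

lemma coeff_Tminus: "coeff (Tminus n) n = 1 \<and> (\<forall>k>n. coeff (Tminus n) k = 0)"
proof (cases "n < 2")
  case True
  then have "n = 0 \<or> n = 1" by auto
  then show ?thesis by (auto simp: Tminus_def coeff_pCons split: nat.split)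
next
  case False
  define m where "m = n - 2"
  then have "n = Suc (Suc m)"
    using False by simp
  then show ?thesis
    using coeff_chebU[of n] coeff_chebU[of m] by (auto simp: Tminus_Suc_Suc)
qed

lemma degree_Tminus: "degree (Tminus n) = n"
  using coeff_Tminus[of n] by (intro degree_eqI_coeff) auto

lemma lead_coeff_Tminus: "lead_coeff (Tminus n) = 1"
  using coeff_Tminus[of n] by (simp add: degree_Tminus)

lemma fapp_finv_Tminus:
  assumes "n \<ge> 1"
  shows "fapp (finv cheb_mom) (Tminus n) = 0"
proof (cases "n = 1")
  case True
  show ?thesis
    unfolding True Tminus_small using fapp_monom[of "finv cheb_mom" 1 1]
    by (simp add: monom_Suc finv_cheb_mom one_pCons)
next
  case False
  define k where "k = n - 2"
  then have n: "n = Suc (Suc k)"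
    using assms False by simp
  show ?thesis
  proof (cases "even k")
    case True
    then obtain j where k: "k = 2 * j" by blast
    define s where "s = 2 * real j + 1"
    define c where "c = (-1/4 :: real) ^ j / pi"
    have "s > 0"
      unfolding s_def using of_nat_0_le_iff[of j] by linarith
    have k2: "Suc (Suc k) = 2 * Suc j"
      using k by simp
    have closed_forms: "fapp (finv cheb_mom) (chebU (Suc (Suc k))) = (s + 2) * (- 1/4 * c)"
      "fapp (finv cheb_mom) (chebU k) = s * c" "gammaM (Suc (Suc k)) = (s + 2) / (4 * s)"
      unfolding fapp_finv_chebU gammaM_def k2 unfolding k s_def c_def
      by (simp_all add: algebra_simps)
    show ?thesis
      unfolding n Tminus_Suc_Suc fapp_add fapp_smult closed_forms
      using \<open>s > 0\<close> by (simp add: field_simps)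
  next
    case False
    then show ?thesis
      unfolding n Tminus_Suc_Suc fapp_add fapp_smult fapp_finv_chebU by simp
  qed
qed

lemma gammaM_aminus_relations:
  "gammaM (k + 4) + aminus (k + 3) = 1/4 + gammaM (k + 3)
   \<and> aminus (k + 3) * gammaM (k + 2) = gammaM (k + 3) / 4"
proof (cases "even k")
  case True
  define s where "s = real k + 3"
  have s: "s \<noteq> 0" "s - 2 \<noteq> 0"
    by (simp_all add: s_def)
  have closed_forms: "gammaM (k + 4) = (s + 2) / (4 * s)" "gammaM (k + 3) = 1/4"
    "aminus (k + 3) = (s - 2) / (4 * s)" "gammaM (k + 2) = s / (4 * (s - 2))"
    using True by (simp_all add: gammaM_def aminus_def s_def algebra_simps)
  show ?thesis
    unfolding closed_forms using s by (simp add: field_simps)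
next
  case False
  define s where "s = real k + 2"
  have s: "s \<noteq> 0"
    by (simp add: s_def)
  have closed_forms: "gammaM (k + 4) = 1/4" "gammaM (k + 3) = (s + 2) / (4 * s)"
    "aminus (k + 3) = (s + 2) / (4 * s)" "gammaM (k + 2) = 1/4"
    using False by (simp_all add: gammaM_def aminus_def s_def algebra_simps)
  show ?thesis
    unfolding closed_forms by simp
qed

lemma Tminus_recurrence_add_3:
  "[:0, 1:] * Tminus (k + 3) = Tminus (k + 4) + Polynomial.smult (aminus (k + 3)) (Tminus (k + 2))"
proof -
  have T: "Tminus (k + 2) = chebU (k + 2) + Polynomial.smult (gammaM (k + 2)) (chebU k)"
    "Tminus (k + 3) = chebU (k + 3) + Polynomial.smult (gammaM (k + 3)) (chebU (k + 1))"
    "Tminus (k + 4) = chebU (k + 4) + Polynomial.smult (gammaM (k + 4)) (chebU (k + 2))"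
    by (simp_all add: Tminus_def del: chebU.simps)
  have X: "[:0, 1:] * chebU (k + 3) = chebU (k + 4) + Polynomial.smult (1/4) (chebU (k + 2))"
    "[:0, 1:] * chebU (k + 1) = chebU (k + 2) + Polynomial.smult (1/4) (chebU k)"
    using chebU_x_mult[of "k + 2"] chebU_x_mult[of k] by (simp_all add: numeral_eq_Suc)
  have "Tminus (k + 4) + Polynomial.smult (aminus (k + 3)) (Tminus (k + 2))
      = chebU (k + 4) + Polynomial.smult (gammaM (k + 4) + aminus (k + 3)) (chebU (k + 2))
        + Polynomial.smult (aminus (k + 3) * gammaM (k + 2)) (chebU k)"
    using T by (simp add: smult_add_left smult_add_right algebra_simps numeral_eq_Suc del: chebU.simps)
  also have "\<dots> = chebU (k + 4) + Polynomial.smult (1/4 + gammaM (k + 3)) (chebU (k + 2))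
        + Polynomial.smult (gammaM (k + 3) / 4) (chebU k)"
    using gammaM_aminus_relations[of k] by (simp only:)
  also have "\<dots> = [:0, 1:] * Tminus (k + 3)"
    unfolding T distrib_left mult_smult_right X
    by (simp add: smult_add_left smult_add_right algebra_simps del: chebU.simps)
  finally show ?thesis ..
qed

lemma Tminus_recurrence:
  assumes "n \<ge> 1"
  shows "[:0, 1:] * Tminus n = Tminus (Suc n) + Polynomial.smult (aminus n) (Tminus (n - 1))"
proof -
  have "n = 1 \<or> n = 2 \<or> n = (n - 3) + 3"
    using assms by linarith
  then consider "n = 1" | "n = 2" | k where "n = k + 3"
    by blast
  then show ?thesis
  proof cases
    case 1
    have "[:0, 1:] * Tminus 1 = Tminus 2 + Polynomial.smult (aminus 1) (Tminus 0)"
      unfolding Tminus_small by (simp add: aminus_def)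
    then show ?thesis
      using 1 by (simp add: numeral_2_eq_2)
  next
    case 2
    have "aminus 2 = 3/4"
      by (simp add: aminus_def)
    then have "[:0, 1:] * Tminus 2 = Tminus 3 + Polynomial.smult (aminus 2) (Tminus 1)"
      unfolding Tminus_small by simp
    then show ?thesis
      using 2 by (simp add: numeral_3_eq_3)
  next
    case 3
    then show ?thesis
      using Tminus_recurrence_add_3[of k] by (simp add: numeral_eq_Suc del: chebU.simps)
  qed
qed

lemma aminus_nonzero: "n \<ge> 1 \<Longrightarrow> aminus n \<noteq> 0"
  by (auto simp: aminus_def)

lemma monic_OPS_Tminus: "monic_OPS (finv cheb_mom) Tminus"
  by (rule monic_OPS_if_recurrence[OF degree_Tminus lead_coeff_Tminus _ _ Tminus_recurrence
        aminus_nonzero fapp_finv_Tminus])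
     (simp_all add: Tminus_def finv_cheb_mom)

theorem mainTheorem16:
  shows "(\<forall>p :: real poly. fapp (finv cheb_mom) p =
            - (1 / pi\<^sup>2) * integral {-1..1}
                (\<lambda>x. (poly p x - poly p 0 - poly (pderiv p) 0 * x) / x\<^sup>2 * (1 - x\<^sup>2) powr (1/2))
            + (1 / pi) * poly p 0)
       \<and> quasi_definite (finv cheb_mom)
       \<and> monic_OPS (finv cheb_mom) Tminus
       \<and> (\<forall>n\<ge>1. [:0, 1:] * Tminus n = Tminus (Suc n) + Polynomial.smult (aminus n) (Tminus (n - 1)))"
  using fapp_finv_cheb_mom_integral quasi_definite_if_monic_OPS[OF monic_OPS_Tminus]
    monic_OPS_Tminus Tminus_recurrence by blast

end
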